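(* Let $\alpha=(\alpha_1,\dots,\alpha_k)$ be a composition of $n$ with $k$ parts. Fix positive integers $i_1<\dots<i_k$ and consider all words that are rearrangements of the multiset containing $i_j$ with multiplicity $\alpha_j$ for each $j$ (words with this fixed content, of packed content $\alpha$). Then the number of $\#$-Sylvester equivalence classes of these words is \[\det\left[\binom{j+\sum_{\ell=1}^i\alpha_\ell}{j-(i-1)}\right]_{1\le i,j\le k-1}\] (the empty determinant, for $k=1$, being $1$).
   Context: Words are finite sequences of positive integers; the packed content of a word is the composition listing the multiplicities of its distinct letters in increasing order of the letters. Two words $w_1,w_2$ are $\#$-Sylvester adjacent if there are words $u,v,w$ and letters $a<b\le c$ with $w_1=u\,b\,v\,a\,c\,w$ and $w_2=u\,b\,v\,c\,a\,w$. $\#$-Sylvester equivalence is the equivalence relation generated by $\#$-Sylvester adjacency. Binomial coefficients $\binom{N}{r}$ with $r<0$ are $0$. *)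

theory Defs
  imports "Jordan_Normal_Form.Determinant" "HOL-Library.Multiset"
begin

definition sylv_adj :: "nat list \<Rightarrow> nat list \<Rightarrow> bool" where
  "sylv_adj w1 w2 \<longleftrightarrow> (\<exists>u v w a b c. a < b \<and> b \<le> c \<and>
      w1 = u @ [b] @ v @ [a, c] @ w \<and> w2 = u @ [b] @ v @ [c, a] @ w)"

definition sylv_equiv :: "nat list \<Rightarrow> nat list \<Rightarrow> bool" where
  "sylv_equiv = (\<lambda>x y. sylv_adj x y \<or> sylv_adj y x)\<^sup>*\<^sup>*"

definition binom_int :: "nat \<Rightarrow> int \<Rightarrow> int" where
  "binom_int N r = (if r < 0 then 0 else int (N choose nat r))"

definition words_with_content :: "nat list \<Rightarrow> nat list \<Rightarrow> nat list set" where
  "words_with_content al ls =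
     {w. mset w = (\<Sum>j<length al. replicate_mset (al ! j) (ls ! j))}"

end

theory Submission
  imports Defs "HOL-Computational_Algebra.Polynomial" "HOL-Library.Tree"
begin

text \<open>
  The insertion tree of a word (its first letter at the root, the later letters smaller than
  it forming the left subtree and the others the right subtree, recursively) is a complete
  invariant of #-Sylvester equivalence, so it suffices to count the insertion trees of words
  of a given content M. Weighting each tree by (1 - X)^e, where e is the number of its nodes
  off the right spine, gives a polynomial R(M) whose value at 0 is the number C(M) of trees.
  Splitting at the root shows that R(M) is unchanged when a further copy of the largest
  letter is added, and that X R(M + m) = R(M) - C(M) (1 - X)^(|M| + 1) when the letter m
  exceeds all letters of M. For the contents M_s of the compositions
  (alpha_1, ..., alpha_s, 1) this telescopes to
    1 = sum_(s<t) C(M_s) X^s (1 - X)^(alpha_1 + ... + alpha_(s+1) + 1) + X^t R(M_t),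
  and multiplying by (1 - X)^m and comparing coefficients of X^(m+1), which vanish on the
  left, gives a unitriangular recurrence for the C(M_s). Its solution is the Hessenberg
  determinant of the statement, and the full content has as many trees as M_(k-1).
\<close>

section \<open>Sylvester classes and insertion trees\<close>

fun sylv_tree :: "'a::linorder list \<Rightarrow> 'a tree" where
  "sylv_tree [] = Leaf"
| "sylv_tree (x # w) =
     Node (sylv_tree (filter (\<lambda>y. y < x) w)) x (sylv_tree (filter (\<lambda>y. x \<le> y) w))"

lemma sylv_equiv_eq_rtranclp_symclp: "sylv_equiv = (symclp sylv_adj)\<^sup>*\<^sup>*"
  unfolding sylv_equiv_def symclp_def ..

lemma sylv_equiv_refl [simp]: "sylv_equiv w w"
  by (simp add: sylv_equiv_def)

lemma sylv_equiv_sym [sym]: "sylv_equiv w1 w2 \<Longrightarrow> sylv_equiv w2 w1"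
  unfolding sylv_equiv_eq_rtranclp_symclp by (rule rtranclp_symclp_sym)

lemma sylv_equiv_trans [trans]:
  "sylv_equiv w1 w2 \<Longrightarrow> sylv_equiv w2 w3 \<Longrightarrow> sylv_equiv w1 w3"
  unfolding sylv_equiv_def by (rule rtranclp_trans)

lemma sylv_tree_swap:
  assumes "b \<in> set p" "a < b" "b \<le> c"
  shows "sylv_tree (p @ a # c # q) = sylv_tree (p @ c # a # q)"
  using assms
proof (induction "length p" arbitrary: p q rule: less_induct)
  case less
  then obtain x p' where p: "p = x # p'" by (cases p) auto
  let ?lo = "filter (\<lambda>y. y < x)" and ?hi = "filter (\<lambda>y. x \<le> y)"
  \<comment> \<open>Unless the root x separates a from c, the letter b lies on the same side as both.\<close>
  consider "c < x" | "x \<le> a" | "a < x" "x \<le> c" by fastforce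
  then show ?case
  proof cases
    case 1
    with less.prems p have "b \<in> set (?lo p')" by auto
    moreover have "length (?lo p') < length p" using p by (simp add: le_imp_less_Suc)
    ultimately show ?thesis using less.hyps[of "?lo p'" "?lo q"] less.prems p 1 by auto
  next
    case 2
    with less.prems p have "b \<in> set (?hi p')" by auto
    moreover have "length (?hi p') < length p" using p by (simp add: le_imp_less_Suc)
    ultimately show ?thesis using less.hyps[of "?hi p'" "?hi q"] less.prems p 2 by auto
  qed (use p in auto)
qed

lemma sylv_tree_eq_if_sylv_adj: "sylv_adj w1 w2 \<Longrightarrow> sylv_tree w1 = sylv_tree w2"
  using sylv_tree_swap[of _ "_ @ [_] @ _"] unfolding sylv_adj_def by fastforce

lemma sylv_tree_eq_if_sylv_equiv: "sylv_equiv w1 w2 \<Longrightarrow> sylv_tree w1 = sylv_tree w2"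
  unfolding sylv_equiv_eq_rtranclp_symclp
  by (induction rule: rtranclp_induct) (auto elim!: symclpE simp: sylv_tree_eq_if_sylv_adj)

lemma sylv_adj_append: "sylv_adj w1 w2 \<Longrightarrow> sylv_adj (p @ w1 @ q) (p @ w2 @ q)"
  unfolding sylv_adj_def
proof (elim exE conjE)
  fix u v w and a b c :: nat
  assume "a < b" "b \<le> c" "w1 = u @ [b] @ v @ [a, c] @ w" "w2 = u @ [b] @ v @ [c, a] @ w"
  then show "\<exists>u v w a b c. a < b \<and> b \<le> c \<and> p @ w1 @ q = u @ [b] @ v @ [a, c] @ w \<and>
      p @ w2 @ q = u @ [b] @ v @ [c, a] @ w"
    by (intro exI[of _ "p @ u"] exI[of _ v] exI[of _ "w @ q"]) auto
qed

lemma sylv_equiv_append: "sylv_equiv w1 w2 \<Longrightarrow> sylv_equiv (p @ w1 @ q) (p @ w2 @ q)"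
  unfolding sylv_equiv_eq_rtranclp_symclp
proof (induction rule: rtranclp_induct)
  case (step v w)
  then have "symclp sylv_adj (p @ v @ q) (p @ w @ q)"
    by (metis symclpE symclpI1 symclpI2 sylv_adj_append)
  with step.IH show ?case by (rule rtranclp.rtrancl_into_rtrancl)
qed simp

lemma sylv_equiv_swap:
  assumes "b \<in> set p" "a < b" "b \<le> c"
  shows "sylv_equiv (p @ c # a # q) (p @ a # c # q)"
proof -
  obtain u v where "p = u @ b # v" using assms(1) by (meson split_list)
  then have "sylv_adj (p @ a # c # q) (p @ c # a # q)"
    using assms unfolding sylv_adj_def
    by (intro exI[of _ u] exI[of _ v] exI[of _ q] exI[of _ a] exI[of _ b] exI[of _ c]) auto
  then show ?thesis
    unfolding sylv_equiv_eq_rtranclp_symclp by (intro r_into_rtranclp symclpI2)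
qed

lemma sylv_equiv_move_right:
  assumes "b \<in> set p" "\<forall>a\<in>set u. a < b" "b \<le> c"
  shows "sylv_equiv (p @ c # u @ q) (p @ u @ c # q)"
  using assms
proof (induction u arbitrary: p)
  case (Cons a u)
  have "sylv_equiv (p @ c # a # u @ q) (p @ a # c # u @ q)"
    using Cons.prems by (intro sylv_equiv_swap) auto
  also have "sylv_equiv \<dots> (p @ a # u @ c # q)"
    using Cons.IH[of "p @ [a]"] Cons.prems by simp
  finally show ?case by simp
qed simp

lemma sylv_equiv_partition:
  assumes "x \<in> set p"
  shows "sylv_equiv (p @ w) (p @ filter (\<lambda>y. y < x) w @ filter (\<lambda>y. x \<le> y) w)"
  using assms
proof (induction w arbitrary: p)
  case (Cons c w)
  let ?lo = "filter (\<lambda>y. y < x) w" and ?hi = "filter (\<lambda>y. x \<le> y) w"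
  have IH: "sylv_equiv ((p @ [c]) @ w) ((p @ [c]) @ ?lo @ ?hi)"
    using Cons.prems by (intro Cons.IH) auto
  show ?case
  proof (cases "c < x")
    case True
    with IH show ?thesis by simp
  next
    case False
    have "sylv_equiv (p @ c # w) (p @ c # ?lo @ ?hi)"
      using IH by simp
    also have "sylv_equiv \<dots> (p @ ?lo @ c # ?hi)"
      using Cons.prems False by (intro sylv_equiv_move_right) auto
    finally show ?thesis using False by simp
  qed
qed simp

lemma sylv_equiv_if_sylv_tree_eq: "sylv_tree w1 = sylv_tree w2 \<Longrightarrow> sylv_equiv w1 w2"
proof (induction w1 arbitrary: w2 rule: sylv_tree.induct)
  case 1
  then show ?case by (cases w2) auto
next
  case (2 x w)
  then obtain w' where w2: "w2 = x # w'" by (cases w2) auto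
  let ?lo = "filter (\<lambda>y. y < x)" and ?hi = "filter (\<lambda>y. x \<le> y)"
  have "sylv_equiv ([x] @ w) ([x] @ ?lo w @ ?hi w)"
    by (rule sylv_equiv_partition) simp
  also have "sylv_equiv \<dots> ([x] @ ?lo w' @ ?hi w)"
    using 2 w2 by (intro sylv_equiv_append) simp
  also have "sylv_equiv \<dots> ([x] @ ?lo w' @ ?hi w')"
    using sylv_equiv_append[of "?hi w" "?hi w'" "[x] @ ?lo w'" "[]"] 2 w2 by simp
  also have "sylv_equiv \<dots> ([x] @ w')"
    by (rule sylv_equiv_sym) (use sylv_equiv_partition[of x "[x]" w'] in simp)
  finally show ?case using w2 by simp
qed

lemma sylv_equiv_iff_sylv_tree_eq: "sylv_equiv w1 w2 \<longleftrightarrow> sylv_tree w1 = sylv_tree w2"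
  using sylv_equiv_if_sylv_tree_eq sylv_tree_eq_if_sylv_equiv by blast

lemma card_sylv_classes:
  "card ((\<lambda>w. {w'. sylv_equiv w w'}) ` A) = card (sylv_tree ` A)"
proof -
  have "(\<lambda>w. {w'. sylv_equiv w w'}) = (\<lambda>T. sylv_tree -` {T}) \<circ> sylv_tree"
    by (auto simp: fun_eq_iff sylv_equiv_iff_sylv_tree_eq)
  then have "(\<lambda>w. {w'. sylv_equiv w w'}) ` A = (\<lambda>T. sylv_tree -` {T}) ` sylv_tree ` A"
    by (simp only: image_comp)
  moreover have "inj_on (\<lambda>T. sylv_tree -` {T}) (sylv_tree ` A)"
    by (rule inj_onI) blast
  ultimately show ?thesis
    by (simp add: card_image)
qed


section \<open>Counting insertion trees\<close>

definition sylv_trees :: "'a::linorder multiset \<Rightarrow> 'a tree set" where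
  "sylv_trees M = sylv_tree ` {w. mset w = M}"

fun nodes_off_right_spine :: "'a tree \<Rightarrow> nat" where
  "nodes_off_right_spine Leaf = 0"
| "nodes_off_right_spine (Node l x r) = size l + nodes_off_right_spine r"

definition spine_poly :: "'a::linorder multiset \<Rightarrow> int poly" where
  "spine_poly M = (\<Sum>T\<in>sylv_trees M. [:1, -1:] ^ nodes_off_right_spine T)"

definition left_content :: "'a::linorder \<Rightarrow> 'a multiset \<Rightarrow> 'a multiset" where
  "left_content x M = filter_mset (\<lambda>y. y < x) M"

definition right_content :: "'a::linorder \<Rightarrow> 'a multiset \<Rightarrow> 'a multiset" where
  "right_content x M = filter_mset (\<lambda>y. x \<le> y) M - {#x#}"

lemma finite_sylv_trees: "finite (sylv_trees M)"
  using ex_mset[of M] mset_eq_finite unfolding sylv_trees_def by (metis finite_imageI)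

lemma sylv_trees_empty [simp]: "sylv_trees {#} = {Leaf}"
  unfolding sylv_trees_def by auto

lemma size_sylv_tree: "size (sylv_tree w) = length w"
proof (induction w rule: sylv_tree.induct)
  case (2 x w)
  have "length (filter (\<lambda>y. y < x) w) + length (filter (\<lambda>y. x \<le> y) w) = length w"
    using sum_length_filter_compl[of "\<lambda>y. y < x" w] by (simp add: not_less)
  with 2 show ?case by simp
qed simp

lemma size_sylv_trees: "T \<in> sylv_trees M \<Longrightarrow> size T = size M"
  unfolding sylv_trees_def by (auto simp: size_sylv_tree)

lemma left_right_content:
  assumes "x \<in># M"
  shows "M = add_mset x (left_content x M + right_content x M)"
proof -
  have "M = filter_mset (\<lambda>y. y < x) M + filter_mset (\<lambda>y. \<not> y < x) M"
    by (rule multiset_partition)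
  then have "M = filter_mset (\<lambda>y. y < x) M + filter_mset (\<lambda>y. x \<le> y) M"
    by (simp add: not_less)
  with assms show ?thesis
    unfolding left_content_def right_content_def by (simp add: insert_DiffM)
qed

lemma size_left_right_content:
  "x \<in># M \<Longrightarrow> size (left_content x M) + size (right_content x M) + 1 = size M"
  by (subst (3) left_right_content) simp_all

lemma sylv_trees_decomp:
  assumes "M \<noteq> {#}"
  shows "sylv_trees M = (\<Union>x\<in>set_mset M.
    (\<lambda>(l, r). Node l x r) ` (sylv_trees (left_content x M) \<times> sylv_trees (right_content x M)))"
    (is "_ = ?U")
proof
  show "sylv_trees M \<subseteq> ?U"
  proof
    fix T assume "T \<in> sylv_trees M"
    then obtain x w where w: "mset (x # w) = M" "T = sylv_tree (x # w)"
      using assms unfolding sylv_trees_def by (auto simp: neq_Nil_conv)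
    let ?l = "sylv_tree (filter (\<lambda>y. y < x) w)" and ?r = "sylv_tree (filter (\<lambda>y. x \<le> y) w)"
    have "mset (filter (\<lambda>y. y < x) w) = left_content x M"
      and "mset (filter (\<lambda>y. x \<le> y) w) = right_content x M"
      using w unfolding left_content_def right_content_def by auto
    then have "(?l, ?r) \<in> sylv_trees (left_content x M) \<times> sylv_trees (right_content x M)"
      unfolding sylv_trees_def by blast
    moreover have "T = (\<lambda>(l, r). Node l x r) (?l, ?r)" and "x \<in># M"
      using w by auto
    ultimately show "T \<in> ?U" by (intro UN_I rev_image_eqI)
  qed
next
  show "?U \<subseteq> sylv_trees M"
  proof clarsimp
    fix x l r
    assume "x \<in># M" "l \<in> sylv_trees (left_content x M)" "r \<in> sylv_trees (right_content x M)"
    then obtain u v where u: "mset u = left_content x M" "l = sylv_tree u"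
      and v: "mset v = right_content x M" "r = sylv_tree v"
      unfolding sylv_trees_def by auto
    have "\<forall>y\<in>set u. y < x" "\<forall>y\<in>set v. x \<le> y"
      using u(1) v(1) unfolding left_content_def right_content_def
      by (auto simp flip: set_mset_mset dest: in_diffD)
    then have "Node l x r = sylv_tree (x # u @ v)"
      using u v by (simp add: not_less not_le)
    moreover have "mset (x # u @ v) = M"
      using u v left_right_content[OF \<open>x \<in># M\<close>] by simp
    ultimately show "Node l x r \<in> sylv_trees M"
      unfolding sylv_trees_def by blast
  qed
qed

lemma sum_sylv_trees:
  assumes "M \<noteq> {#}"
  shows "(\<Sum>T\<in>sylv_trees M. f T) = (\<Sum>x\<in>set_mset M. \<Sum>l\<in>sylv_trees (left_content x M).
            \<Sum>r\<in>sylv_trees (right_content x M). f (Node l x r))"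
proof -
  have inj: "inj_on (\<lambda>(l, r). Node l x r) A" for x and A :: "('a tree \<times> 'a tree) set"
    by (auto simp: inj_on_def)
  have "(\<Sum>T\<in>sylv_trees M. f T) = (\<Sum>x\<in>set_mset M. \<Sum>T\<in>(\<lambda>(l, r). Node l x r) `
          (sylv_trees (left_content x M) \<times> sylv_trees (right_content x M)). f T)"
    unfolding sylv_trees_decomp[OF assms]
    by (rule sum.UNION_disjoint) (auto simp: finite_sylv_trees)
  also have "\<dots> = (\<Sum>x\<in>set_mset M. \<Sum>(l, r)\<in>sylv_trees (left_content x M) \<times>
          sylv_trees (right_content x M). f (Node l x r))"
    by (rule sum.cong[OF refl]) (subst sum.reindex[OF inj], simp add: case_prod_unfold)
  finally show ?thesis
    by (simp add: sum.cartesian_product)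
qed

lemma card_sylv_trees_rec:
  assumes "M \<noteq> {#}"
  shows "card (sylv_trees M) =
    (\<Sum>x\<in>set_mset M. card (sylv_trees (left_content x M)) * card (sylv_trees (right_content x M)))"
  using sum_sylv_trees[OF assms, of "\<lambda>_. 1 :: nat"] by simp

lemma spine_poly_rec:
  assumes "M \<noteq> {#}"
  shows "spine_poly M = (\<Sum>x\<in>set_mset M. of_nat (card (sylv_trees (left_content x M))) *
    [:1, -1:] ^ size (left_content x M) * spine_poly (right_content x M))"
  unfolding spine_poly_def sum_sylv_trees[OF assms]
  by (simp add: size_sylv_trees power_add sum_distrib_left mult.assoc)

lemma card_sylv_trees_eq_poly: "int (card (sylv_trees M)) = poly (spine_poly M) 0"
  by (simp add: spine_poly_def poly_sum poly_power)

lemma spine_poly_empty [simp]: "spine_poly {#} = 1"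
  by (simp add: spine_poly_def)

lemma sylv_trees_singleton [simp]: "sylv_trees {#x#} = {Node Leaf x Leaf}"
  unfolding sylv_trees_def by auto

lemma spine_poly_singleton [simp]: "spine_poly {#x#} = 1"
  by (simp add: spine_poly_def)

lemma left_content_add_max: "x \<le> m \<Longrightarrow> left_content x (add_mset m M) = left_content x M"
  by (simp add: left_content_def)

lemma right_content_add_max:
  assumes "x \<in># M" "x \<le> m"
  shows "right_content x (add_mset m M) = add_mset m (right_content x M)"
proof -
  have "x \<in># filter_mset (\<lambda>y. x \<le> y) M" using assms(1) by simp
  then show ?thesis
    using assms(2) unfolding right_content_def by (cases "x = m") (auto simp: insert_DiffM)
qed

lemma spine_poly_add_max_copy:
  assumes "m \<in># M" "\<forall>y\<in>#M. y \<le> m"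
  shows "spine_poly (add_mset m M) = spine_poly M"
  using assms
proof (induction "size M" arbitrary: M rule: less_induct)
  case less
  have right: "spine_poly (add_mset m (right_content x M)) = spine_poly (right_content x M)"
    if x: "x \<in># M" for x
  proof (cases "right_content x M = {#}")
    case False
    have R: "\<forall>y\<in>#right_content x M. x \<le> y \<and> y \<in># M"
      unfolding right_content_def by (auto dest: in_diffD)
    have "m \<in># right_content x M"
    proof (cases "x = m")
      case True
      with False R less.prems show ?thesis by (metis antisym multiset_nonemptyE)
    next
      case False
      with x less.prems show ?thesis by (auto simp: right_content_def in_diff_count)
    qed
    moreover have "size (right_content x M) < size M"
      using size_left_right_content[OF x] by simp
    ultimately show ?thesis
      using R less by blast
  qed simp
  have "M \<noteq> {#}" using less.prems by auto
  then show ?case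
    using less.prems right
    by (simp add: spine_poly_rec left_content_add_max right_content_add_max insert_absorb cong: sum.cong)
qed

lemma spine_poly_add_max_copies:
  assumes "m \<in># M" "\<forall>y\<in>#M. y \<le> m"
  shows "spine_poly (M + replicate_mset j m) = spine_poly M"
proof (induction j)
  case (Suc j)
  have "spine_poly (add_mset m (M + replicate_mset j m)) = spine_poly (M + replicate_mset j m)"
    using assms by (intro spine_poly_add_max_copy) auto
  with Suc.IH show ?case by simp
qed simp

lemma one_minus_X_poly: "[:1, -1:] = (1 - [:0, 1:] :: 'a::comm_ring_1 poly)"
  by (simp add: one_pCons)

lemma spine_poly_add_new_max_rec:
  assumes "\<forall>y\<in>#M. y < m"
  shows "spine_poly (add_mset m M) = of_nat (card (sylv_trees M)) * [:1, -1:] ^ size M +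
    (\<Sum>x\<in>set_mset M. of_nat (card (sylv_trees (left_content x M))) *
      [:1, -1:] ^ size (left_content x M) * spine_poly (add_mset m (right_content x M)))"
proof -
  have "m \<notin># M" using assms by auto
  moreover have "left_content m (add_mset m M) = M" "right_content m (add_mset m M) = {#}"
    using assms unfolding left_content_def right_content_def by (auto simp: filter_mset_eq_conv)
  ultimately show ?thesis
    using assms
    by (simp add: spine_poly_rec left_content_add_max right_content_add_max less_imp_le
        cong: sum.cong)
qed

lemma spine_poly_add_new_max:
  assumes "\<forall>y\<in>#M. y < m"
  shows "[:0, 1:] * spine_poly (add_mset m M) =
    spine_poly M - of_nat (card (sylv_trees M)) * [:1, -1:] ^ (size M + 1)"
  using assms
proof (induction "size M" arbitrary: M rule: less_induct)
  case less
  let ?q = "[:1, -1:] :: int poly" and ?X = "[:0, 1:] :: int poly"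
  let ?C = "\<lambda>A. of_nat (card (sylv_trees A)) :: int poly"
  let ?L = "\<lambda>x. left_content x M" and ?R = "\<lambda>x. right_content x M"
  have "?X * (?C (?L x) * ?q ^ size (?L x) * spine_poly (add_mset m (?R x))) =
      ?C (?L x) * ?q ^ size (?L x) * spine_poly (?R x) - ?C (?L x) * ?C (?R x) * ?q ^ size M"
    if x: "x \<in># M" for x
  proof -
    have IH: "?X * spine_poly (add_mset m (?R x)) =
        spine_poly (?R x) - ?C (?R x) * ?q ^ (size (?R x) + 1)"
      using size_left_right_content[OF x] less.prems
      by (intro less.hyps) (auto simp: right_content_def dest: in_diffD)
    have "?X * (?C (?L x) * ?q ^ size (?L x) * spine_poly (add_mset m (?R x))) =
        ?C (?L x) * ?q ^ size (?L x) * (?X * spine_poly (add_mset m (?R x)))"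
      by (simp only: ac_simps)
    also have "\<dots> = ?C (?L x) * ?q ^ size (?L x) * spine_poly (?R x) -
        ?C (?L x) * ?C (?R x) * ?q ^ (size (?L x) + size (?R x) + 1)"
      unfolding IH by (simp add: algebra_simps power_add)
    finally show ?thesis
      by (simp only: size_left_right_content[OF x])
  qed
  then have "?X * spine_poly (add_mset m M) = ?X * ?C M * ?q ^ size M +
      (\<Sum>x\<in>set_mset M. ?C (?L x) * ?q ^ size (?L x) * spine_poly (?R x)) -
      (\<Sum>x\<in>set_mset M. ?C (?L x) * ?C (?R x)) * ?q ^ size M"
    using less.prems
    by (simp add: spine_poly_add_new_max_rec distrib_left mult.assoc sum_distrib_left
        sum_distrib_right sum_subtractf cong: sum.cong)
  also have "\<dots> = ?X * ?C M * ?q ^ size M + spine_poly M - ?C M * ?q ^ size M"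
    by (cases "M = {#}") (simp_all add: spine_poly_rec card_sylv_trees_rec)
  also have "\<dots> = spine_poly M - ?C M * ?q ^ (size M + 1)"
    by (simp add: one_minus_X_poly algebra_simps)
  finally show ?case .
qed


section \<open>Hessenberg determinants\<close>

lemma det_hessenberg_minor:
  fixes f :: "nat \<times> nat \<Rightarrow> 'a::idom"
  assumes subdiag: "\<And>i. f (Suc i, i) = 1" and below: "\<And>i j. Suc j < i \<Longrightarrow> f (i, j) = 0"
    and "i \<le> m"
  shows "det (mat_delete (mat (Suc m) (Suc m) f) i m) = det (mat i i f)"
proof -
  define B where "B = mat i (m - i) (\<lambda>(r, c). f (r, c + i))"
  define U where "U = mat (m - i) (m - i) (\<lambda>(r, c). f (Suc (r + i), c + i))"
  have blocks:
    "mat_delete (mat (Suc m) (Suc m) f) i m = four_block_mat (mat i i f) B (0\<^sub>m (m - i) i) U"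
    by (rule eq_matI) (use \<open>i \<le> m\<close> below in \<open>auto simp: mat_delete_def B_def U_def\<close>)
  have B: "B \<in> carrier_mat i (m - i)" and U: "U \<in> carrier_mat (m - i) (m - i)"
    by (simp_all add: B_def U_def)
  have "upper_triangular U"
    unfolding upper_triangular_def U_def using below by auto
  then have "det U = prod_list (diag_mat U)"
    using U by (rule det_upper_triangular)
  also have "diag_mat U = replicate (m - i) 1"
    unfolding diag_mat_def U_def using subdiag by (auto intro!: nth_equalityI)
  finally have "det U = 1" by simp
  then show ?thesis
    unfolding blocks by (subst det_four_block_mat_lower_left_zero[OF _ B refl U]) simp_all
qed

lemma det_hessenberg_expansion:
  fixes f :: "nat \<times> nat \<Rightarrow> 'a::idom"
  assumes subdiag: "\<And>i. f (Suc i, i) = 1" and below: "\<And>i j. Suc j < i \<Longrightarrow> f (i, j) = 0"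
  shows "det (mat (Suc m) (Suc m) f) = (\<Sum>i\<le>m. (-1) ^ (m - i) * f (i, m) * det (mat i i f))"
proof -
  have "det (mat (Suc m) (Suc m) f) =
      (\<Sum>i<Suc m. mat (Suc m) (Suc m) f $$ (i, m) * cofactor (mat (Suc m) (Suc m) f) i m)"
    by (rule laplace_expansion_column) auto
  also have "\<dots> = (\<Sum>i\<le>m. (-1) ^ (m - i) * f (i, m) * det (mat i i f))"
  proof (rule sum.cong)
    fix i assume "i \<in> {..m}"
    then have "i + m = (m - i) + 2 * i" by simp
    then have "(-1::'a) ^ (i + m) = (-1) ^ (m - i)"
      by (simp only: power_add power_mult) simp
    with \<open>i \<in> {..m}\<close>
    show "mat (Suc m) (Suc m) f $$ (i, m) * cofactor (mat (Suc m) (Suc m) f) i m =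
        (-1) ^ (m - i) * f (i, m) * det (mat i i f)"
      by (simp add: cofactor_def det_hessenberg_minor[of f, OF subdiag below])
  qed (simp add: lessThan_Suc_atMost)
  finally show ?thesis .
qed

lemma det_hessenberg_eq_recurrence:
  fixes f :: "nat \<times> nat \<Rightarrow> 'a::idom"
  assumes subdiag: "\<And>i. f (Suc i, i) = 1" and below: "\<And>i j. Suc j < i \<Longrightarrow> f (i, j) = 0"
    and c0: "c 0 = 1"
    and c_rec: "\<And>m. Suc m \<le> t \<Longrightarrow> c (Suc m) = (\<Sum>i\<le>m. (-1) ^ (m - i) * f (i, m) * c i)"
  shows "det (mat t t f) = c t"
  using c_rec
proof (induction t rule: less_induct)
  case (less t)
  show ?case
  proof (cases t)
    case 0
    have "mat 0 0 f = 1\<^sub>m 0" by (rule eq_matI) auto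
    with 0 c0 show ?thesis by simp
  next
    case (Suc m)
    then have "det (mat t t f) = (\<Sum>i\<le>m. (-1) ^ (m - i) * f (i, m) * c i)"
      using less by (simp add: det_hessenberg_expansion[of f, OF subdiag below])
    with Suc less.prems show ?thesis by simp
  qed
qed

section \<open>Words of a fixed content\<close>

lemma coeff_one_minus_X_power:
  "coeff ([:1, -1:] ^ N :: 'a::comm_ring_1 poly) j = (-1) ^ j * of_nat (N choose j)"
proof (cases "j \<le> N")
  case False
  then have "degree ([:1, -1:] ^ N :: 'a poly) < j"
    using degree_power_le[of "[:1, -1:] :: 'a poly" N] by simp
  with False show ?thesis by (simp add: coeff_eq_0 binomial_eq_0)
qed (simp add: coeff_linear_poly_power)

definition prefix_content :: "nat list \<Rightarrow> 'a list \<Rightarrow> nat \<Rightarrow> 'a multiset" where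
  "prefix_content al ls s = (\<Sum>j<s. replicate_mset (al ! j) (ls ! j))"

definition truncated_content :: "nat list \<Rightarrow> 'a list \<Rightarrow> nat \<Rightarrow> 'a multiset" where
  "truncated_content al ls s = add_mset (ls ! s) (prefix_content al ls s)"

lemma size_prefix_content:
  "s \<le> length al \<Longrightarrow> size (prefix_content al ls s) = sum_list (take s al)"
  by (induction s) (simp_all add: prefix_content_def take_Suc_conv_app_nth)

context
  fixes al :: "nat list" and ls :: "'a::linorder list"
  assumes parts_pos: "\<forall>x\<in>set al. 0 < x"
    and length_letters: "length ls = length al"
    and letters_increasing: "sorted_wrt (<) ls"
begin

lemma prefix_content_less:
  assumes "y \<in># prefix_content al ls s" "s < length al"
  shows "y < ls ! s"
proof -
  obtain j where "j < s" "y = ls ! j"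
    using assms(1) unfolding prefix_content_def
    by (auto simp: set_mset_sum in_replicate_mset split: if_splits)
  with assms(2) length_letters letters_increasing show ?thesis
    by (simp add: sorted_wrt_nth_less)
qed

lemma spine_poly_prefix_content_Suc:
  assumes "s < length al"
  shows "spine_poly (prefix_content al ls (Suc s)) = spine_poly (truncated_content al ls s)"
proof -
  obtain a where "al ! s = Suc a"
    using assms parts_pos by (metis gr0_conv_Suc nth_mem)
  then have "prefix_content al ls (Suc s) = truncated_content al ls s + replicate_mset a (ls ! s)"
    by (simp add: prefix_content_def truncated_content_def)
  moreover have "\<forall>y\<in>#truncated_content al ls s. y \<le> ls ! s"
    using assms prefix_content_less by (auto simp: truncated_content_def less_imp_le)
  ultimately show ?thesis
    using spine_poly_add_max_copies[of "ls ! s" "truncated_content al ls s" a]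
    by (simp add: truncated_content_def)
qed

lemma card_sylv_trees_prefix_content_Suc:
  "s < length al \<Longrightarrow>
    card (sylv_trees (prefix_content al ls (Suc s))) = card (sylv_trees (truncated_content al ls s))"
  using card_sylv_trees_eq_poly spine_poly_prefix_content_Suc by (metis of_nat_eq_iff)

lemma spine_poly_truncated_content_Suc:
  assumes "Suc s < length al"
  shows "spine_poly (truncated_content al ls s) =
    [:0, 1:] * spine_poly (truncated_content al ls (Suc s)) +
    of_nat (card (sylv_trees (truncated_content al ls s))) *
      [:1, -1:] ^ (sum_list (take (Suc s) al) + 1)"
proof -
  have "\<forall>y\<in>#prefix_content al ls (Suc s). y < ls ! Suc s"
    using assms prefix_content_less by blast
  from spine_poly_add_new_max[OF this] assms show ?thesis
    by (simp add: truncated_content_def spine_poly_prefix_content_Suc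
        card_sylv_trees_prefix_content_Suc size_prefix_content)
qed

lemma spine_poly_telescope:
  assumes "t < length al"
  shows "1 = (\<Sum>s<t. of_nat (card (sylv_trees (truncated_content al ls s))) * monom 1 s *
             [:1, -1:] ^ (sum_list (take (Suc s) al) + 1)) +
           monom 1 t * spine_poly (truncated_content al ls t)"
  using assms
proof (induction t)
  case 0
  then show ?case by (simp add: truncated_content_def prefix_content_def)
next
  case (Suc t)
  have "[:0, 1:] = (monom 1 1 :: int poly)"
    by (simp add: monom_Suc)
  then have "monom 1 t * spine_poly (truncated_content al ls t) =
      monom 1 (Suc t) * spine_poly (truncated_content al ls (Suc t)) +
      of_nat (card (sylv_trees (truncated_content al ls t))) * monom 1 t *
      [:1, -1:] ^ (sum_list (take (Suc t) al) + 1)"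
    unfolding spine_poly_truncated_content_Suc[OF Suc.prems]
    by (simp add: algebra_simps mult_monom)
  with Suc show ?case by simp
qed

lemma card_truncated_content_alternating_sum:
  assumes "Suc m < length al"
  shows "(\<Sum>s\<le>Suc m. (-1) ^ (Suc m - s) *
      int ((Suc m + sum_list (take (Suc s) al)) choose (Suc m - s)) *
      int (card (sylv_trees (truncated_content al ls s)))) = 0"
proof -
  let ?q = "[:1, -1:] :: int poly"
  let ?C = "\<lambda>s. int (card (sylv_trees (truncated_content al ls s)))"
  define E where "E s = Suc m + sum_list (take (Suc s) al)" for s
  have expansion: "?q ^ m = (\<Sum>s<Suc m. of_int (?C s) * (monom 1 s * ?q ^ E s)) +
      monom 1 (Suc m) * (?q ^ m * spine_poly (truncated_content al ls (Suc m)))"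
  proof -
    have "?q ^ m * (of_nat (card (sylv_trees (truncated_content al ls s))) * monom 1 s *
        ?q ^ (sum_list (take (Suc s) al) + 1)) = of_int (?C s) * (monom 1 s * ?q ^ E s)" for s
    proof -
      have "m + (sum_list (take (Suc s) al) + 1) = E s" by (simp add: E_def)
      then have "?q ^ m * ?q ^ (sum_list (take (Suc s) al) + 1) = ?q ^ E s"
        by (simp only: power_add[symmetric])
      then show ?thesis
        by (simp only: of_int_of_nat_eq ac_simps)
    qed
    then show ?thesis
      using arg_cong[OF spine_poly_telescope[OF assms], of "\<lambda>p. ?q ^ m * p"]
      by (simp add: distrib_left sum_distrib_left mult.left_commute)
  qed
  have "coeff (?q ^ m) (Suc m) = (\<Sum>s<Suc m. ?C s * coeff (?q ^ E s) (Suc m - s)) +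
      poly (?q ^ m * spine_poly (truncated_content al ls (Suc m))) 0"
    by (subst (1) expansion)
      (simp add: coeff_sum coeff_monom_mult poly_0_coeff_0 of_nat_poly del: sum.lessThan_Suc)
  then have "(\<Sum>s\<le>m. (-1) ^ (Suc m - s) * int (E s choose (Suc m - s)) * ?C s) + ?C (Suc m) = 0"
    by (simp add: coeff_one_minus_X_power poly_power card_sylv_trees_eq_poly lessThan_Suc_atMost
        binomial_eq_0 ac_simps)
  then show ?thesis
    by (simp add: E_def)
qed

lemma card_truncated_content_rec:
  assumes "Suc m < length al"
  shows "int (card (sylv_trees (truncated_content al ls (Suc m)))) =
    (\<Sum>s\<le>m. (-1) ^ (m - s) * int ((Suc m + sum_list (take (Suc s) al)) choose (Suc m - s)) *
      int (card (sylv_trees (truncated_content al ls s))))"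
proof -
  let ?b = "\<lambda>s. int ((Suc m + sum_list (take (Suc s) al)) choose (Suc m - s)) *
    int (card (sylv_trees (truncated_content al ls s)))"
  have "(\<Sum>s\<le>m. (-1) ^ (Suc m - s) * ?b s) = - (\<Sum>s\<le>m. (-1) ^ (m - s) * ?b s)"
    by (auto simp: sum_negf[symmetric] Suc_diff_le intro!: sum.cong)
  then show ?thesis
    using card_truncated_content_alternating_sum[OF assms] by (simp add: mult.assoc)
qed

end

theorem corollary4p12:
  fixes al ls :: "nat list" and n k :: nat
  assumes "length al = k" and "k \<ge> 1"
    and "\<forall>x \<in> set al. x > 0" and "sum_list al = n"
    and "length ls = k" and "sorted_wrt (<) ls" and "\<forall>x \<in> set ls. x > 0"
  shows "int (card ((\<lambda>w. {w'. sylv_equiv w w'}) ` words_with_content al ls)) =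
    det (mat (k - 1) (k - 1)
      (\<lambda>(i, j). binom_int (j + 1 + sum_list (take (i + 1) al)) (int j - int i + 1)))"
proof -
  let ?f = "\<lambda>(i, j). binom_int (j + 1 + sum_list (take (i + 1) al)) (int j - int i + 1)"
  let ?c = "\<lambda>s. int (card (sylv_trees (truncated_content al ls s)))"
  have content: "words_with_content al ls = {w. mset w = prefix_content al ls (Suc (k - 1))}"
    using assms(1,2) by (simp add: words_with_content_def prefix_content_def)
  have "card ((\<lambda>w. {w'. sylv_equiv w w'}) ` words_with_content al ls) =
      card (sylv_trees (truncated_content al ls (k - 1)))"
    unfolding card_sylv_classes content sylv_trees_def[symmetric]
    using assms by (intro card_sylv_trees_prefix_content_Suc) auto
  also have "int \<dots> = det (mat (k - 1) (k - 1) ?f)"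
  proof (rule sym, rule det_hessenberg_eq_recurrence)
    show "?c 0 = 1"
      by (simp add: truncated_content_def prefix_content_def)
    fix m assume "Suc m \<le> k - 1"
    have "?f (i, m) = int ((Suc m + sum_list (take (Suc i) al)) choose (Suc m - i))" if "i \<le> m" for i
    proof -
      have "\<not> int m - int i + 1 < 0" "nat (int m - int i + 1) = Suc m - i"
        using that by auto
      then show ?thesis
        unfolding binom_int_def prod.case by (simp only: if_False) simp
    qed
    then show "?c (Suc m) = (\<Sum>i\<le>m. (-1) ^ (m - i) * ?f (i, m) * ?c i)"
      using \<open>Suc m \<le> k - 1\<close> assms by (simp add: card_truncated_content_rec)
  qed (simp_all add: binom_int_def)
  finally show ?thesis .
qed

end
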